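(* Let $\Gamma\leq Tr_1(n,\mathbb{Z})$ be a finitely generated torsion-free nilpotent group, $p$ a prime, $L$ the $\mathbb{Q}$-span of $\log(\Gamma)$ and $L_p$ the $\mathbb{Q}$-span of $\log(\Gamma_p)$, where $\Gamma_p$ is the closure of $\Gamma$ in $Tr_1(n,\mathbb{Z}_p)$. Then $\dim_{\mathbb{Q}}(L)=\dim_{\mathbb{Q}_{p}}(L_{p})$.
   Context: $Tr_1(n,K)$ denotes upper unitriangular matrices and $Tr_0(n,K)$ strictly upper triangular matrices; $\log:Tr_1(n,\mathbb{Q}_p)\to Tr_0(n,\mathbb{Q}_p)$ is the (finite) logarithm series. $L$ is a $\mathbb{Q}$-Lie algebra and $L_p$ is a $\mathbb{Q}_p$-Lie algebra (under the commutator bracket). *)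

theory Defs
  imports Complex_Main "HOL-Computational_Algebra.Primes"
begin

section \<open>Square matrices of size n, as entry functions (zero outside the n x n block)\<close>

type_synonym 'a sqm = "nat \<Rightarrow> nat \<Rightarrow> 'a"

definition idm :: "nat \<Rightarrow> 'a::{zero,one} sqm" where
  "idm n = (\<lambda>i j. if i = j \<and> i < n then 1 else 0)"

definition mmul :: "nat \<Rightarrow> 'a::comm_semiring_1 sqm \<Rightarrow> 'a sqm \<Rightarrow> 'a sqm" where
  "mmul n A B = (\<lambda>i j. if i < n \<and> j < n then (\<Sum>k<n. A i k * B k j) else 0)"

definition mpow :: "nat \<Rightarrow> 'a::comm_semiring_1 sqm \<Rightarrow> nat \<Rightarrow> 'a sqm" where
  "mpow n A k = ((mmul n A) ^^ k) (idm n)"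

definition unitri :: "nat \<Rightarrow> 'a::{zero,one} sqm \<Rightarrow> bool" where
  "unitri n M \<longleftrightarrow> (\<forall>i j. (\<not> (i < n \<and> j < n) \<longrightarrow> M i j = 0)
                       \<and> (i < n \<and> j < n \<and> j < i \<longrightarrow> M i j = 0)
                       \<and> (i < n \<and> i = j \<longrightarrow> M i j = 1))"

text \<open>The (finite) logarithm series log(M) = sum_{k>=1} (-1)^(k+1) (M - 1)^k / k,
  which terminates for unitriangular M since (M-1)^n = 0.\<close>
definition mlog :: "nat \<Rightarrow> 'a::field_char_0 sqm \<Rightarrow> 'a sqm" where
  "mlog n M = (\<lambda>i j. \<Sum>k\<in>{1..n}. ((-1) ^ (k + 1) / of_nat k) * mpow n (\<lambda>a b. M a b - idm n a b) k i j)"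

definition subgroup_Tr1Z :: "nat \<Rightarrow> int sqm set \<Rightarrow> bool" where
  "subgroup_Tr1Z n H \<longleftrightarrow> H \<subseteq> {M. unitri n M} \<and> idm n \<in> H
     \<and> (\<forall>g\<in>H. \<forall>h\<in>H. mmul n g h \<in> H)
     \<and> (\<forall>g\<in>H. \<exists>h\<in>H. mmul n g h = idm n)"

definition fin_gen_Tr1Z :: "nat \<Rightarrow> int sqm set \<Rightarrow> bool" where
  "fin_gen_Tr1Z n G \<longleftrightarrow> (\<exists>S. finite S \<and> S \<subseteq> G
      \<and> (\<forall>H. subgroup_Tr1Z n H \<and> S \<subseteq> H \<longrightarrow> G \<subseteq> H))"

definition torsion_free_Tr1Z :: "nat \<Rightarrow> int sqm set \<Rightarrow> bool" where
  "torsion_free_Tr1Z n G \<longleftrightarrow> (\<forall>g\<in>G. \<forall>k>0. mpow n g k = idm n \<longrightarrow> g = idm n)"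

definition commutators :: "nat \<Rightarrow> int sqm set \<Rightarrow> int sqm set \<Rightarrow> int sqm set" where
  "commutators n G H = {mmul n g (mmul n h (mmul n g' h')) | g h g' h'.
      g \<in> G \<and> h \<in> H \<and> unitri n g' \<and> unitri n h' \<and>
      mmul n g g' = idm n \<and> mmul n h h' = idm n}"

primrec lcs :: "nat \<Rightarrow> int sqm set \<Rightarrow> nat \<Rightarrow> int sqm set" where
  "lcs n G 0 = G"
| "lcs n G (Suc k) = \<Inter>{H. subgroup_Tr1Z n H \<and> commutators n G (lcs n G k) \<subseteq> H}"

definition nilpotent_Tr1Z :: "nat \<Rightarrow> int sqm set \<Rightarrow> bool" where
  "nilpotent_Tr1Z n G \<longleftrightarrow> (\<exists>k. lcs n G k = {idm n})"

definition span_over :: "'a::field set \<Rightarrow> 'a sqm set \<Rightarrow> 'a sqm set" where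
  "span_over R S = {(\<lambda>i j. \<Sum>v\<in>F. c v * v i j) | F c.
      finite F \<and> F \<subseteq> S \<and> (\<forall>v\<in>F. c v \<in> R)}"

definition lin_indep :: "'a::field sqm set \<Rightarrow> bool" where
  "lin_indep F \<longleftrightarrow> finite F \<and>
     (\<forall>c. (\<forall>i j. (\<Sum>v\<in>F. c v * v i j) = 0) \<longrightarrow> (\<forall>v\<in>F. c v = 0))"

definition mdim :: "'a::field sqm set \<Rightarrow> nat" where
  "mdim S = Max {card F | F. F \<subseteq> S \<and> lin_indep F}"

text \<open>K with absolute value nv is (a copy of) Q_p: a field of characteristic 0 with a
  non-archimedean absolute value restricting to the p-adic one on Z, complete, and in which
  Q is dense.  Such a field is unique up to isometric isomorphism.\<close>
definition padic_field :: "nat \<Rightarrow> ('k::field_char_0 \<Rightarrow> real) \<Rightarrow> bool" where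
  "padic_field p nv \<longleftrightarrow>
     (\<forall>x. nv x \<ge> 0) \<and> (\<forall>x. nv x = 0 \<longleftrightarrow> x = 0)
   \<and> (\<forall>x y. nv (x * y) = nv x * nv y)
   \<and> (\<forall>x y. nv (x + y) \<le> max (nv x) (nv y))
   \<and> (\<forall>m::int. m \<noteq> 0 \<longrightarrow> nv (of_int m) = (1 / real p) ^ multiplicity (int p) m)
   \<and> (\<forall>X::nat \<Rightarrow> 'k. (\<forall>e>0. \<exists>N. \<forall>a\<ge>N. \<forall>b\<ge>N. nv (X a - X b) < e)
          \<longrightarrow> (\<exists>l. \<forall>e>0. \<exists>N. \<forall>a\<ge>N. nv (X a - l) < e))
   \<and> (\<forall>x. \<forall>e>0. \<exists>q::rat. nv (x - of_rat q) < e)"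

text \<open>Gamma_p: closure of Gamma in Tr_1(n,Z_p), Z_p = {x. nv x <= 1}.\<close>
definition padic_closure :: "nat \<Rightarrow> ('k::field_char_0 \<Rightarrow> real) \<Rightarrow> int sqm set \<Rightarrow> 'k sqm set" where
  "padic_closure n nv G = {M. unitri n M \<and> (\<forall>i j. nv (M i j) \<le> 1) \<and>
      (\<forall>e>0. \<exists>g\<in>G. \<forall>i<n. \<forall>j<n. nv (M i j - of_int (g i j)) < e)}"

end

theory Submission
  imports Defs "HOL-Library.Function_Algebras"
begin

(* Let V be the K-span of log Gamma in the space of n x n matrices over K.  Since log Gamma
   consists of rational matrices, a Q-linear functional K -> Q applied entrywise turns every
   K-linear relation among them into a rational one, so dim_K V = dim_Q L.  Gamma lies in
   Gamma_p, and conversely log Gamma_p lies in V: a K-linear functional vanishing on V is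
   bounded with respect to the ultrametric sup-norm of matrices, and log is Lipschitz on
   matrices with entries in Z_p, so by density of Gamma in Gamma_p it vanishes on log Gamma_p
   as well.  Hence V is also the K-span of log Gamma_p, whose dimension is the right-hand
   side. *)

section \<open>Separating linear functionals\<close>

lemma vector_space_mult: "vector_space ((*) :: 'a::field \<Rightarrow> 'a \<Rightarrow> 'a)"
  by unfold_locales (auto simp: algebra_simps)

lemma (in vector_space) exists_linear_functional_separating:
  assumes "x \<notin> span S"
  obtains \<phi> where "Vector_Spaces.linear scale (*) \<phi>" "\<phi> x = 1" "\<And>y. y \<in> span S \<Longrightarrow> \<phi> y = 0"
proof -
  interpret vector_space_pair scale "(*) :: 'a \<Rightarrow> 'a \<Rightarrow> 'a"
    by (intro vector_space_pair.intro vector_space_axioms vector_space_mult)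
  obtain B where B: "B \<subseteq> S" "independent B" "S \<subseteq> span B"
    using maximal_independent_subset by blast
  have x: "x \<notin> span B"
    using assms span_mono[OF B(1)] by blast
  have ind: "independent (insert x B)"
    by (rule independent_insertI[OF x B(2)])
  define \<phi> where "\<phi> = construct (insert x B) (\<lambda>v. if v = x then 1 else 0)"
  have lin: "Vector_Spaces.linear scale (*) \<phi>"
    unfolding \<phi>_def by (rule linear_construct[OF ind])
  moreover have "\<phi> x = 1"
    unfolding \<phi>_def by (simp add: construct_basis[OF ind])
  moreover have "\<phi> y = 0" if "y \<in> span S" for y
  proof -
    have "\<phi> v = 0" if "v \<in> B" for v
      using that x span_base[of v B] unfolding \<phi>_def
      by (subst construct_basis[OF ind]) auto
    then show ?thesis
      using linear_eq_0_on_span[OF lin] that span_mono[OF B(3)] span_span by blast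
  qed
  ultimately show ?thesis by (rule that)
qed

lemma vector_space_of_rat_scale: "vector_space (\<lambda>q (x::'k::field_char_0). of_rat q * x)"
  by unfold_locales (auto simp: algebra_simps of_rat_add of_rat_mult)

lemma exists_rat_linear_functional:
  fixes a :: "'k::field_char_0"
  assumes "a \<noteq> 0"
  obtains l :: "'k \<Rightarrow> rat"
  where "\<And>x y. l (x + y) = l x + l y" "\<And>q x. l (of_rat q * x) = q * l x" "l a = 1"
proof -
  interpret Q: vector_space "\<lambda>q (x::'k). of_rat q * x"
    by (rule vector_space_of_rat_scale)
  obtain l :: "'k \<Rightarrow> rat" where "Vector_Spaces.linear (\<lambda>q x. of_rat q * x) (*) l" "l a = 1"
    using Q.exists_linear_functional_separating[of a "{}"] assms by auto
  then show ?thesis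
    using that unfolding Vector_Spaces.linear_iff by blast
qed

section \<open>Matrices as a vector space\<close>

definition mscale :: "'a::field \<Rightarrow> 'a sqm \<Rightarrow> 'a sqm" where
  "mscale c M = (\<lambda>i j. c * M i j)"

interpretation mat: vector_space "mscale :: 'a::field \<Rightarrow> 'a sqm \<Rightarrow> 'a sqm"
  by unfold_locales (auto simp: mscale_def fun_eq_iff algebra_simps)

lemma sum_apply: "(\<Sum>x\<in>A. f x) i = (\<Sum>x\<in>A. f x i)"
  by (induct A rule: infinite_finite_induct) auto

lemma sum_mscale_apply: "(\<Sum>v\<in>F. mscale (u v) (w v)) = (\<lambda>i j. \<Sum>v\<in>F. u v * w v i j)"
  by (simp add: fun_eq_iff sum_apply mscale_def)

lemma lin_indep_iff_independent: "finite F \<Longrightarrow> lin_indep F \<longleftrightarrow> mat.independent F"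
  unfolding lin_indep_def mat.dependent_finite sum_mscale_apply by (auto simp: fun_eq_iff)

lemma span_over_subset_span: "span_over R S \<subseteq> mat.span S"
  unfolding span_over_def mat.span_explicit sum_mscale_apply by auto

lemma subset_span_over: "1 \<in> R \<Longrightarrow> S \<subseteq> span_over R S"
  unfolding span_over_def by (force intro!: exI[of _ "\<lambda>_. 1"])

definition mat_unit :: "nat \<Rightarrow> nat \<Rightarrow> 'a::field sqm" where
  "mat_unit a b = (\<lambda>i j. if i = a \<and> j = b then 1 else 0)"

definition mat_units :: "nat \<Rightarrow> 'a::field sqm set" where
  "mat_units n = (\<lambda>(a, b). mat_unit a b) ` ({..<n} \<times> {..<n})"

lemma mat_unit_expansion:
  assumes "\<And>i j. \<not> (i < n \<and> j < n) \<Longrightarrow> X i j = 0"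
  shows "X = (\<Sum>(a, b)\<in>{..<n} \<times> {..<n}. mscale (X a b) (mat_unit a b))"
proof -
  have "(\<Sum>(a, b)\<in>{..<n} \<times> {..<n}. X a b * mat_unit a b i j) = X i j" for i j
  proof (cases "i < n \<and> j < n")
    case True
    then have "(\<Sum>(a, b)\<in>{..<n} \<times> {..<n}. X a b * mat_unit a b i j)
        = (\<Sum>q\<in>{..<n} \<times> {..<n}. if q = (i, j) then X i j else 0)"
      by (intro sum.cong) (auto simp: mat_unit_def split: if_splits)
    with True show ?thesis by simp
  next
    case False
    then show ?thesis using assms by (auto simp: mat_unit_def intro!: sum.neutral)
  qed
  then show ?thesis
    by (simp add: fun_eq_iff case_prod_beta sum_mscale_apply[where u = "\<lambda>q. X (fst q) (snd q)"])
qed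

lemma in_span_mat_units:
  assumes "\<And>i j. \<not> (i < n \<and> j < n) \<Longrightarrow> X i j = 0"
  shows "X \<in> mat.span (mat_units n)"
proof -
  have "X = (\<Sum>(a, b)\<in>{..<n} \<times> {..<n}. mscale (X a b) (mat_unit a b))"
    using assms by (rule mat_unit_expansion)
  also have "\<dots> \<in> mat.span (mat_units n)"
    by (intro mat.span_sum) (auto simp: mat_units_def intro: mat.span_scale[OF mat.span_base])
  finally show ?thesis .
qed

lemma finite_mat_units: "finite (mat_units n)"
  by (simp add: mat_units_def)

lemma mdim_eq_dim:
  assumes "finite T" "S \<subseteq> mat.span T"
  shows "mdim S = mat.dim S"
proof -
  have card_le: "card F \<le> mat.dim S" if FS: "F \<subseteq> S" and indF: "mat.independent F" for F
  proof -
    obtain B where B: "F \<subseteq> B" "B \<subseteq> S" "mat.independent B" "S \<subseteq> mat.span B"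
      using mat.maximal_independent_subset_extend[OF FS indF] by blast
    have "finite B"
      using mat.independent_span_bound[OF assms(1) B(3)] B(2) assms(2) by blast
    then show ?thesis
      using B mat.basis_card_eq_dim[of B S] card_mono by fastforce
  qed
  define D where "D = {card F |F. F \<subseteq> S \<and> lin_indep F}"
  have le: "m \<le> mat.dim S" if m: "m \<in> D" for m
  proof -
    obtain F where F: "m = card F" "F \<subseteq> S" "lin_indep F"
      using m unfolding D_def by blast
    then have "mat.independent F"
      using lin_indep_iff_independent lin_indep_def by blast
    with F show ?thesis
      using card_le by blast
  qed
  obtain B where B: "B \<subseteq> S" "mat.independent B" "S \<subseteq> mat.span B" "card B = mat.dim S"
    using mat.basis_exists by blast
  have "finite B"
    using mat.independent_span_bound[OF assms(1) B(2)] B(1) assms(2) by blast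
  then have "lin_indep B"
    using B(2) lin_indep_iff_independent by blast
  then have "mat.dim S \<in> D"
    unfolding D_def using B(1,4) by (auto intro!: exI[of _ B])
  moreover have "finite D"
    using le by (meson finite_atMost finite_subset subsetI atMost_iff)
  ultimately show ?thesis
    unfolding mdim_def D_def[symmetric] using le by (intro Max_eqI) auto
qed

lemma mdim_span_over_eq_dim:
  assumes "finite T" "S \<subseteq> mat.span T" "1 \<in> R"
  shows "mdim (span_over R S) = mat.dim S"
proof -
  have "span_over R S \<subseteq> mat.span T"
    using span_over_subset_span assms(2) mat.span_mono mat.span_span by blast
  then have "mdim (span_over R S) = mat.dim (span_over R S)"
    using mdim_eq_dim[OF assms(1)] by blast
  also have "\<dots> = mat.dim S"
    using subset_span_over[OF assms(3)] span_over_subset_span[of R S] mat.span_superset[of "span_over R S"]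
    by (intro mat.span_eq_dim) (auto simp: mat.span_eq)
  finally show ?thesis .
qed

lemma mpow_0 [simp]: "mpow n A 0 = idm n"
  by (simp add: mpow_def)

lemma mpow_Suc [simp]: "mpow n A (Suc k) = mmul n A (mpow n A k)"
  by (simp add: mpow_def)

lemma mlog_outside_block: "\<not> (i < n \<and> j < n) \<Longrightarrow> mlog n M i j = 0"
proof -
  assume outside: "\<not> (i < n \<and> j < n)"
  have "mpow n A k i j = 0" if "k \<in> {1..n}" for A :: "'a::field_char_0 sqm" and k
    using outside that by (cases k) (auto simp: mmul_def)
  then show ?thesis
    by (simp add: mlog_def)
qed

lemma mlog_in_span_mat_units: "mlog n M \<in> mat.span (mat_units n)"
  by (rule in_span_mat_units) (rule mlog_outside_block)

section \<open>Rational matrices as matrices over K\<close>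

definition mat_of_rat :: "rat sqm \<Rightarrow> 'k::field_char_0 sqm" where
  "mat_of_rat X = (\<lambda>i j. of_rat (X i j))"

lemma inj_mat_of_rat: "inj mat_of_rat"
  by (auto simp: inj_def mat_of_rat_def fun_eq_iff)

lemma mat_of_rat_of_int: "mat_of_rat (\<lambda>i j. of_int (g i j)) = (\<lambda>i j. of_int (g i j))"
  by (simp add: mat_of_rat_def)

lemma mat_of_rat_idm: "mat_of_rat (idm n) = idm n"
  by (auto simp: fun_eq_iff mat_of_rat_def idm_def)

lemma mat_of_rat_mmul: "mat_of_rat (mmul n A B) = mmul n (mat_of_rat A) (mat_of_rat B)"
  by (auto simp: fun_eq_iff mat_of_rat_def mmul_def of_rat_sum of_rat_mult)

lemma mat_of_rat_mpow: "mat_of_rat (mpow n A k) = mpow n (mat_of_rat A) k"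
  by (induct k) (simp_all add: mat_of_rat_idm mat_of_rat_mmul)

lemma mat_of_rat_mlog: "(mat_of_rat (mlog n X) :: 'k::field_char_0 sqm) = mlog n (mat_of_rat X)"
proof -
  have diff: "mat_of_rat (\<lambda>a b. X a b - idm n a b) = (\<lambda>a b. of_rat (X a b) - idm n a b)"
    using mat_of_rat_idm[of n] by (auto simp: fun_eq_iff mat_of_rat_def of_rat_diff)
  have pow: "of_rat (mpow n (\<lambda>a b. X a b - idm n a b) k i j)
      = (mpow n (\<lambda>a b. of_rat (X a b) - idm n a b) k i j :: 'k)" for k i j
    using arg_cong[where f = "\<lambda>M. M i j", OF mat_of_rat_mpow[of n "\<lambda>a b. X a b - idm n a b" k]]
    unfolding diff by (simp only: mat_of_rat_def)
  have coeff: "of_rat ((-1) ^ (k + 1) / of_nat k) = ((-1) ^ (k + 1) / of_nat k :: 'k)" for k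
    by (simp add: of_rat_divide of_rat_power of_rat_minus)
  show ?thesis
    by (simp only: mlog_def mat_of_rat_def of_rat_sum of_rat_mult pow coeff)
qed

lemma mat_of_rat_sum_mscale:
  "mat_of_rat (\<Sum>v\<in>F. mscale (u v) v) = (\<Sum>v\<in>F. mscale (of_rat (u v)) (mat_of_rat v))"
  by (simp add: sum_mscale_apply mat_of_rat_def of_rat_sum of_rat_mult)

lemma mat_of_rat_in_span:
  assumes "X \<in> mat.span S"
  shows "mat_of_rat X \<in> mat.span (mat_of_rat ` S)"
proof -
  obtain F u where X: "X = (\<Sum>v\<in>F. mscale (u v) v)" and F: "F \<subseteq> S"
    using assms unfolding mat.span_explicit by blast
  show ?thesis
    unfolding X mat_of_rat_sum_mscale using F
    by (intro mat.span_sum mat.span_scale mat.span_base) auto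
qed

lemma rat_relation_of_mat_of_rat_relation:
  fixes c :: "rat sqm \<Rightarrow> 'k::field_char_0" and l :: "'k \<Rightarrow> rat"
  assumes l_add: "\<And>x y. l (x + y) = l x + l y" and l_scale: "\<And>q x. l (of_rat q * x) = q * l x"
    and rel: "(\<Sum>v\<in>F. mscale (c v) (mat_of_rat v)) = 0"
  shows "(\<Sum>v\<in>F. mscale (l (c v)) v) = 0"
proof -
  have l_zero: "l 0 = 0"
    using l_scale[of 0 0] by simp
  have l_scale': "l (x * of_rat q) = l x * q" for x q
    using l_scale[of q x] by (simp add: mult.commute)
  have l_sum: "l (\<Sum>v\<in>F. f v) = (\<Sum>v\<in>F. l (f v))" for f
    using l_add l_zero by (induct F rule: infinite_finite_induct) auto
  have "(\<Sum>v\<in>F. c v * of_rat (v i j)) = 0" for i j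
    using fun_cong[OF fun_cong[OF rel], of i j] by (simp add: sum_mscale_apply mat_of_rat_def)
  then have "l (\<Sum>v\<in>F. c v * of_rat (v i j)) = 0" for i j
    by (simp add: l_zero)
  then have "(\<Sum>v\<in>F. l (c v) * v i j) = 0" for i j
    by (simp only: l_sum l_scale')
  then show ?thesis
    by (simp add: sum_mscale_apply fun_eq_iff)
qed

lemma independent_mat_of_rat_image:
  assumes "mat.independent B"
  shows "mat.independent (mat_of_rat ` B :: 'k::field_char_0 sqm set)"
proof
  assume "mat.dependent (mat_of_rat ` B :: 'k sqm set)"
  then obtain T and u :: "'k sqm \<Rightarrow> 'k" and w
    where T: "finite T" "T \<subseteq> mat_of_rat ` B" "(\<Sum>v\<in>T. mscale (u v) v) = 0"
      and w: "w \<in> T" "u w \<noteq> 0"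
    unfolding mat.dependent_explicit by blast
  obtain T\<^sub>0 where T\<^sub>0: "T\<^sub>0 \<subseteq> B" "T = mat_of_rat ` T\<^sub>0"
    using T(2) by (auto simp: subset_image_iff)
  have inj: "inj_on (mat_of_rat :: rat sqm \<Rightarrow> 'k sqm) T\<^sub>0"
    using inj_mat_of_rat by (rule inj_on_subset) simp
  obtain w\<^sub>0 where w\<^sub>0: "w\<^sub>0 \<in> T\<^sub>0" "w = mat_of_rat w\<^sub>0"
    using w(1) T\<^sub>0(2) by blast
  \<comment> \<open>normalising l to 1 at a nonzero coefficient keeps the rational relation nontrivial\<close>
  obtain l :: "'k \<Rightarrow> rat" where l_add: "\<And>x y. l (x + y) = l x + l y"
    and l_scale: "\<And>q x. l (of_rat q * x) = q * l x" and l_w: "l (u w) = 1"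
    using exists_rat_linear_functional[OF w(2)] by blast
  have "(\<Sum>v\<in>T\<^sub>0. mscale (u (mat_of_rat v)) (mat_of_rat v)) = 0"
    using T(3) by (simp add: T\<^sub>0(2) sum.reindex[OF inj])
  then have "(\<Sum>v\<in>T\<^sub>0. mscale (l (u (mat_of_rat v))) v) = 0"
    by (rule rat_relation_of_mat_of_rat_relation[OF l_add l_scale])
  moreover have "finite T\<^sub>0"
    using T(1) T\<^sub>0(2) finite_image_iff[OF inj] by simp
  moreover have "\<exists>v\<in>T\<^sub>0. l (u (mat_of_rat v)) \<noteq> 0"
    using l_w w\<^sub>0 by (intro bexI[of _ w\<^sub>0]) simp_all
  ultimately have "mat.dependent T\<^sub>0"
    unfolding mat.dependent_explicit
    by (intro exI[of _ T\<^sub>0] exI[of _ "\<lambda>v. l (u (mat_of_rat v))"]) simp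
  then show False
    using assms T\<^sub>0(1) mat.dependent_mono by blast
qed

lemma dim_mat_of_rat_image: "mat.dim (mat_of_rat ` S) = mat.dim S"
proof -
  obtain B where B: "B \<subseteq> S" "mat.independent B" "S \<subseteq> mat.span B" "card B = mat.dim S"
    using mat.basis_exists by blast
  have "mat_of_rat ` S \<subseteq> mat.span (mat_of_rat ` B)"
    using B(3) mat_of_rat_in_span by blast
  moreover have "card (mat_of_rat ` B) = card B"
    using card_image[OF inj_on_subset[OF inj_mat_of_rat subset_UNIV]] .
  ultimately show ?thesis
    using B independent_mat_of_rat_image[OF B(2)] by (intro mat.dim_unique) auto
qed

section \<open>Ultrametric estimates\<close>

locale ultrametric_abs =
  fixes nv :: "'k::field_char_0 \<Rightarrow> real"
  assumes nv_nonneg: "0 \<le> nv x"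
    and nv_eq_0_iff: "nv x = 0 \<longleftrightarrow> x = 0"
    and nv_mult: "nv (x * y) = nv x * nv y"
    and nv_add_le_max: "nv (x + y) \<le> max (nv x) (nv y)"

lemma padic_field_imp_ultrametric_abs: "padic_field p nv \<Longrightarrow> ultrametric_abs nv"
  unfolding padic_field_def by unfold_locales auto

context ultrametric_abs
begin

lemma nv_zero [simp]: "nv 0 = 0"
  by (simp add: nv_eq_0_iff)

lemma nv_one [simp]: "nv 1 = 1"
  using nv_mult[of 1 1] nv_eq_0_iff[of 1] by simp

lemma nv_minus [simp]: "nv (- x) = nv x"
proof -
  have "nv (- 1) * nv (- 1) = 1"
    using nv_mult[of "- 1" "- 1"] by simp
  then have "nv (- 1) = 1"
    using power2_eq_1_iff[of "nv (- 1)"] nv_nonneg[of "- 1"] by (auto simp: power2_eq_square)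
  then show ?thesis
    using nv_mult[of "- 1" x] by simp
qed

lemma nv_diff_le_max: "nv (x - y) \<le> max (nv x) (nv y)"
  using nv_add_le_max[of x "- y"] by simp

lemma nv_sum_le:
  assumes "\<And>x. x \<in> A \<Longrightarrow> nv (f x) \<le> b" and "0 \<le> b"
  shows "nv (sum f A) \<le> b"
  using assms(1)
proof (induction A rule: infinite_finite_induct)
  case (insert x A)
  then have "max (nv (f x)) (nv (sum f A)) \<le> b"
    by simp
  then show ?case
    using order_trans[OF nv_add_le_max] insert(1,2) by simp
qed (use assms(2) in simp_all)

lemma nv_of_nat_le_one: "nv (of_nat m) \<le> 1"
proof (induction m)
  case (Suc m)
  then show ?case
    using nv_add_le_max[of 1 "of_nat m"] by (simp add: max_def split: if_splits)
qed simp

lemma nv_of_int_le_one: "nv (of_int m) \<le> 1"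
proof (cases "0 \<le> m")
  case True
  then show ?thesis
    using nv_of_nat_le_one[of "nat m"] by simp
next
  case False
  then show ?thesis
    using nv_of_nat_le_one[of "nat (- m)"] nv_minus[of "of_int m"] by simp
qed

lemma nv_idm_le_one: "nv (idm n i j) \<le> 1"
  by (simp add: idm_def)

lemma nv_mpow_le_one:
  assumes "\<And>i j. i < n \<Longrightarrow> j < n \<Longrightarrow> nv (A i j) \<le> 1"
  shows "nv (mpow n A k i j) \<le> 1"
proof (induction k arbitrary: i j)
  case 0
  show ?case by (simp add: nv_idm_le_one)
next
  case (Suc k)
  have "nv (A i l * mpow n A k l j) \<le> 1" if "i < n" "l < n" for l
    using assms[OF that] Suc.IH[of l j] nv_nonneg by (simp add: nv_mult mult_le_one)
  then show ?case
    by (auto simp: mmul_def intro!: nv_sum_le)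
qed

lemma nv_mpow_diff_le:
  assumes A: "\<And>i j. i < n \<Longrightarrow> j < n \<Longrightarrow> nv (A i j) \<le> 1"
    and B: "\<And>i j. i < n \<Longrightarrow> j < n \<Longrightarrow> nv (B i j) \<le> 1"
    and AB: "\<And>i j. i < n \<Longrightarrow> j < n \<Longrightarrow> nv (A i j - B i j) \<le> e" and "0 \<le> e"
  shows "nv (mpow n A k i j - mpow n B k i j) \<le> e"
proof (induction k arbitrary: i j)
  case 0
  show ?case using \<open>0 \<le> e\<close> by simp
next
  case (Suc k)
  \<comment> \<open>A A^k - B B^k = A (A^k - B^k) + (A - B) B^k\<close>
  have term_le: "nv (A i l * (mpow n A k l j - mpow n B k l j) + (A i l - B i l) * mpow n B k l j) \<le> e"
    if "i < n" "l < n" for l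
  proof -
    have "nv (A i l * (mpow n A k l j - mpow n B k l j)) \<le> e"
      using mult_mono[OF A[OF that] Suc.IH] nv_nonneg by (simp add: nv_mult)
    moreover have "nv ((A i l - B i l) * mpow n B k l j) \<le> e"
      using mult_mono[OF AB[OF that] nv_mpow_le_one[OF B]] nv_nonneg \<open>0 \<le> e\<close> by (simp add: nv_mult)
    ultimately show ?thesis
      using nv_add_le_max order_trans by fastforce
  qed
  show ?case
  proof (cases "i < n \<and> j < n")
    case True
    then have eq: "mpow n A (Suc k) i j - mpow n B (Suc k) i j
        = (\<Sum>l<n. A i l * (mpow n A k l j - mpow n B k l j) + (A i l - B i l) * mpow n B k l j)"
      by (simp add: mmul_def sum_subtractf[symmetric] algebra_simps)
    have "nv (\<Sum>l<n. A i l * (mpow n A k l j - mpow n B k l j) + (A i l - B i l) * mpow n B k l j) \<le> e"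
      using term_le True \<open>0 \<le> e\<close> by (intro nv_sum_le) auto
    then show ?thesis
      unfolding eq .
  next
    case False
    then show ?thesis
      using \<open>0 \<le> e\<close> by (auto simp: mmul_def)
  qed
qed

lemma nv_mlog_diff_le:
  assumes M: "\<And>i j. i < n \<Longrightarrow> j < n \<Longrightarrow> nv (M i j) \<le> 1"
    and N: "\<And>i j. i < n \<Longrightarrow> j < n \<Longrightarrow> nv (N i j) \<le> 1"
    and MN: "\<And>i j. i < n \<Longrightarrow> j < n \<Longrightarrow> nv (M i j - N i j) \<le> e" and "0 \<le> e"
  shows "nv (mlog n M i j - mlog n N i j) \<le> (\<Sum>k\<in>{1..n}. nv ((-1) ^ (k + 1) / of_nat k)) * e"
proof -
  let ?c = "\<lambda>k. (-1) ^ (k + 1) / of_nat k :: 'k"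
  let ?A = "\<lambda>a b. M a b - idm n a b" and ?B = "\<lambda>a b. N a b - idm n a b"
  have pow_close: "nv (mpow n ?A k i j - mpow n ?B k i j) \<le> e" for k
  proof (rule nv_mpow_diff_le)
    show "nv (?A a b) \<le> 1" "nv (?B a b) \<le> 1" if "a < n" "b < n" for a b
      using nv_diff_le_max[of _ "idm n a b"] M[OF that] N[OF that] nv_idm_le_one[of n a b]
      by (meson max.boundedI order_trans)+
  qed (use MN \<open>0 \<le> e\<close> in auto)
  have "nv (?c k * (mpow n ?A k i j - mpow n ?B k i j))
      \<le> (\<Sum>k\<in>{1..n}. nv (?c k)) * e" if "k \<in> {1..n}" for k
    unfolding nv_mult
    by (rule mult_mono) (use that pow_close nv_nonneg in \<open>auto intro: member_le_sum sum_nonneg\<close>)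
  then have "nv (\<Sum>k\<in>{1..n}. ?c k * (mpow n ?A k i j - mpow n ?B k i j))
      \<le> (\<Sum>k\<in>{1..n}. nv (?c k)) * e"
    using \<open>0 \<le> e\<close> by (intro nv_sum_le mult_nonneg_nonneg sum_nonneg nv_nonneg)
  moreover have "mlog n M i j - mlog n N i j
      = (\<Sum>k\<in>{1..n}. ?c k * (mpow n ?A k i j - mpow n ?B k i j))"
    by (simp add: mlog_def sum_subtractf[symmetric] right_diff_distrib)
  ultimately show ?thesis
    by (simp only:)
qed

lemma nv_linear_functional_le:
  assumes lin: "Vector_Spaces.linear mscale (*) \<phi>"
    and X: "\<And>i j. \<not> (i < n \<and> j < n) \<Longrightarrow> X i j = 0"
    and bound: "\<And>i j. i < n \<Longrightarrow> j < n \<Longrightarrow> nv (X i j) \<le> e" and "0 \<le> e"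
  shows "nv (\<phi> X) \<le> (\<Sum>(a, b)\<in>{..<n} \<times> {..<n}. nv (\<phi> (mat_unit a b))) * e"
proof -
  interpret mat_functional: vector_space_pair mscale "(*) :: 'k \<Rightarrow> 'k \<Rightarrow> 'k"
    by (intro vector_space_pair.intro mat.vector_space_axioms vector_space_mult)
  let ?C = "\<Sum>(a, b)\<in>{..<n} \<times> {..<n}. nv (\<phi> (mat_unit a b))"
  have "\<phi> X = \<phi> (\<Sum>(a, b)\<in>{..<n} \<times> {..<n}. mscale (X a b) (mat_unit a b))"
    using mat_unit_expansion[OF X] by (rule arg_cong)
  also have "\<dots> = (\<Sum>(a, b)\<in>{..<n} \<times> {..<n}. X a b * \<phi> (mat_unit a b))"
    by (simp add: mat_functional.linear_sum[OF lin] mat_functional.linear_scale[OF lin] o_def case_prod_unfold)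
  also have "nv \<dots> \<le> ?C * e"
  proof (rule nv_sum_le)
    fix q :: "nat \<times> nat"
    assume q: "q \<in> {..<n} \<times> {..<n}"
    have "nv (\<phi> (mat_unit (fst q) (snd q))) \<le> ?C"
      using q member_le_sum[of q "{..<n} \<times> {..<n}" "\<lambda>(a, b). nv (\<phi> (mat_unit a b))"] nv_nonneg
      by (auto simp: case_prod_beta)
    then show "nv (case q of (a, b) \<Rightarrow> X a b * \<phi> (mat_unit a b)) \<le> ?C * e"
      using q bound nv_nonneg \<open>0 \<le> e\<close>
      by (auto simp: case_prod_beta nv_mult mult.commute intro!: mult_mono)
  qed (use \<open>0 \<le> e\<close> in \<open>auto intro!: mult_nonneg_nonneg sum_nonneg simp: nv_nonneg split: prod.split\<close>)
  finally show ?thesis .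
qed

lemma of_int_mat_in_padic_closure:
  assumes "g \<in> \<Gamma>" and "unitri n g"
  shows "(\<lambda>i j. of_int (g i j)) \<in> padic_closure n nv \<Gamma>"
  using assms nv_of_int_le_one unfolding padic_closure_def unitri_def by force

lemma mlog_padic_closure_in_span:
  assumes "M \<in> padic_closure n nv \<Gamma>"
  shows "mlog n M \<in> mat.span ((\<lambda>g. mlog n (\<lambda>i j. of_int (g i j))) ` \<Gamma>)"
proof (rule ccontr)
  let ?L = "(\<lambda>g. mlog n (\<lambda>i j. of_int (g i j) :: 'k)) ` \<Gamma>"
  assume "mlog n M \<notin> mat.span ?L"
  then obtain \<phi> where lin: "Vector_Spaces.linear mscale (*) \<phi>" and \<phi>_M: "\<phi> (mlog n M) = 1"
    and \<phi>_L: "\<And>Y. Y \<in> mat.span ?L \<Longrightarrow> \<phi> Y = 0"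
    by (rule mat.exists_linear_functional_separating) blast
  interpret mat_functional: vector_space_pair mscale "(*) :: 'k \<Rightarrow> 'k \<Rightarrow> 'k"
    by (intro vector_space_pair.intro mat.vector_space_axioms vector_space_mult)
  define C_log where "C_log = (\<Sum>k\<in>{1..n}. nv ((-1) ^ (k + 1) / of_nat k))"
  define C_\<phi> where "C_\<phi> = (\<Sum>(a, b)\<in>{..<n} \<times> {..<n}. nv (\<phi> (mat_unit a b)))"
  define e where "e = 1 / (2 * (C_\<phi> * C_log + 1))"
  have C_nonneg: "0 \<le> C_\<phi> * C_log"
    unfolding C_\<phi>_def C_log_def by (intro mult_nonneg_nonneg sum_nonneg) (auto simp: nv_nonneg)
  then have "0 < e"
    by (simp add: e_def)
  then obtain g where "g \<in> \<Gamma>" and g_close: "\<And>i j. i < n \<Longrightarrow> j < n \<Longrightarrow> nv (M i j - of_int (g i j)) < e"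
    using assms unfolding padic_closure_def by blast
  let ?G = "\<lambda>i j. of_int (g i j) :: 'k"
  have log_close: "nv (mlog n M i j - mlog n ?G i j) \<le> C_log * e" for i j
    unfolding C_log_def
  proof (rule nv_mlog_diff_le)
    show "nv (M a b) \<le> 1" "nv (?G a b) \<le> 1" for a b
      using assms nv_of_int_le_one unfolding padic_closure_def by auto
    show "nv (M a b - ?G a b) \<le> e" if "a < n" "b < n" for a b
      using g_close[OF that] by simp
  qed (use \<open>0 < e\<close> in simp)
  have "1 = nv (\<phi> (mlog n M) - \<phi> (mlog n ?G))"
    using \<phi>_M \<phi>_L[OF mat.span_base] \<open>g \<in> \<Gamma>\<close> by simp
  also have "\<dots> = nv (\<phi> (mlog n M - mlog n ?G))"
    by (simp add: mat_functional.linear_diff[OF lin])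
  also have "\<dots> \<le> C_\<phi> * (C_log * e)"
    unfolding C_\<phi>_def using log_close \<open>0 < e\<close> C_nonneg
    by (intro nv_linear_functional_le[OF lin]) (auto simp: mlog_outside_block C_log_def sum_nonneg nv_nonneg)
  also have "\<dots> < 1"
    using C_nonneg by (simp add: e_def field_simps)
  finally show False
    by simp
qed

end

theorem corollary2p14:
  fixes n p :: nat and \<Gamma> :: "int sqm set" and nv :: "'k::field_char_0 \<Rightarrow> real"
  assumes "subgroup_Tr1Z n \<Gamma>"
    and "fin_gen_Tr1Z n \<Gamma>"
    and "torsion_free_Tr1Z n \<Gamma>"
    and "nilpotent_Tr1Z n \<Gamma>"
    and "prime p"
    and "padic_field p nv"
  shows "mdim (span_over (UNIV :: rat set) ((\<lambda>g. mlog n (\<lambda>i j. of_int (g i j))) ` \<Gamma>))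
       = mdim (span_over (\<rat> :: 'k set) (mlog n ` padic_closure n nv \<Gamma>))"
proof -
  interpret ultrametric_abs nv
    using \<open>padic_field p nv\<close> by (rule padic_field_imp_ultrametric_abs)
  define L :: "rat sqm set" where "L = (\<lambda>g. mlog n (\<lambda>i j. of_int (g i j))) ` \<Gamma>"
  define L\<^sub>p :: "'k sqm set" where "L\<^sub>p = mlog n ` padic_closure n nv \<Gamma>"
  have "mat_of_rat ` L \<subseteq> L\<^sub>p"
    using \<open>subgroup_Tr1Z n \<Gamma>\<close> of_int_mat_in_padic_closure
    by (auto simp: L_def L\<^sub>p_def subgroup_Tr1Z_def mat_of_rat_mlog mat_of_rat_of_int)
  moreover have "L\<^sub>p \<subseteq> mat.span (mat_of_rat ` L)"
    using mlog_padic_closure_in_span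
    by (auto simp: L_def L\<^sub>p_def image_image mat_of_rat_mlog mat_of_rat_of_int)
  ultimately have "mat.dim (mat_of_rat ` L :: 'k sqm set) = mat.dim L\<^sub>p"
    using mat.span_superset[of L\<^sub>p] by (intro mat.span_eq_dim) (auto simp: mat.span_eq)
  moreover have "mdim (span_over UNIV L) = mat.dim L"
    by (rule mdim_span_over_eq_dim[OF finite_mat_units[of n]]) (auto simp: L_def mlog_in_span_mat_units)
  moreover have "mdim (span_over \<rat> L\<^sub>p) = mat.dim L\<^sub>p"
    by (rule mdim_span_over_eq_dim[OF finite_mat_units[of n]]) (auto simp: L\<^sub>p_def mlog_in_span_mat_units)
  ultimately show ?thesis
    by (simp add: dim_mat_of_rat_image flip: L_def L\<^sub>p_def)
qed

end
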